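(* Let $n\ge1$, let $a_1,\dots,a_n$ be integers, and let $Q$ be a subset of $E=\{(i,j)\mid 1\le i<j\le n\}$. Let $E\overline{Q}$ be the tournament on $\{1,\dots,n\}$ containing $(i,j)$ for each $(i,j)\in E\setminus Q$ and $(j,i)$ for each $(i,j)\in Q$. Put $$A=\prod_{(i,j)\in Q}\frac{x_j}{x_i},\qquad B=\prod_{1\le i<j\le n}\Big(1-\frac{q^{a_j}x_j}{x_i}\Big).$$ Let $1\le r_1<r_2<\cdots<r_s\le n$, $R=\{r_1,\dots,r_s\}$, let $k_1,\dots,k_s$ be integers, and let $E_{\mathbf r,\mathbf k}$ denote the operation on rational functions of replacing $x_{r_i}$ by $x_{r_s}q^{k_s-k_i}$ for $i=1,\dots,s-1$. Then the degree in $x_{r_s}$ of the rational function $E_{\mathbf r,\mathbf k}(A/B)$ is $0$ if and only if $(r,m)\in E\overline{Q}$ for every $r\in R$ and every $m\in\{1,\dots,n\}\setminus R$; otherwise this degree is negative.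
   Context: $q$ is an indeterminate. The degree in $x$ of a rational function of $x$ is the degree in $x$ of its numerator minus the degree in $x$ of its denominator. *)

theory Defs
  imports "HOL-Library.Poly_Mapping" "HOL-Computational_Algebra.Fraction_Field"
begin

(* Laurent polynomials with integer coefficients in the variables indexed by nat:
  variable 0 is the indeterminate q, variable i (1 <= i) is x_i. This ring is an integral domain
  (library instance), so its fraction field is a field of rational functions. *)

type_synonym lpoly = "(nat \<Rightarrow>\<^sub>0 int) \<Rightarrow>\<^sub>0 int"

definition lmono :: "(nat \<Rightarrow>\<^sub>0 int) \<Rightarrow> lpoly" where
  "lmono m = Poly_Mapping.single m 1"

definition qpow :: "int \<Rightarrow> lpoly" where
  "qpow c = lmono (Poly_Mapping.single 0 c)"

definition xvar :: "nat \<Rightarrow> lpoly" where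
  "xvar i = lmono (Poly_Mapping.single i 1)"

definition xinv :: "nat \<Rightarrow> lpoly" where
  "xinv i = lmono (Poly_Mapping.single i (-1))"

definition ldeg :: "nat \<Rightarrow> lpoly \<Rightarrow> int" where
  "ldeg v p = Max ((\<lambda>m. Poly_Mapping.lookup m v) ` Poly_Mapping.keys p)"

definition rdeg :: "nat \<Rightarrow> lpoly fract \<Rightarrow> int" where
  "rdeg v f = (THE d. \<exists>P Q. P \<noteq> 0 \<and> Q \<noteq> 0 \<and> f = Fract P Q \<and> d = ldeg v P - ldeg v Q)"

definition lsubst :: "(nat \<Rightarrow> (nat \<Rightarrow>\<^sub>0 int)) \<Rightarrow> lpoly \<Rightarrow> lpoly" where
  "lsubst g p = (\<Sum>m\<in>Poly_Mapping.keys p. Poly_Mapping.single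
      (\<Sum>v\<in>Poly_Mapping.keys m. Poly_Mapping.map (\<lambda>c. Poly_Mapping.lookup m v * c) (g v)) (Poly_Mapping.lookup p m))"

definition Esub :: "(nat \<Rightarrow> nat) \<Rightarrow> nat \<Rightarrow> (nat \<Rightarrow> int) \<Rightarrow> lpoly \<Rightarrow> lpoly" where
  "Esub r s k = lsubst (\<lambda>v. if (\<exists>i\<in>{1..<s}. r i = v)
      then Poly_Mapping.single (r s) 1 + Poly_Mapping.single 0 (k s - k (SOME i. i \<in> {1..<s} \<and> r i = v))
      else Poly_Mapping.single v 1)"

definition Epairs :: "nat \<Rightarrow> (nat \<times> nat) set" where
  "Epairs n = {(i, j). 1 \<le> i \<and> i < j \<and> j \<le> n}"

definition EQbar :: "nat \<Rightarrow> (nat \<times> nat) set \<Rightarrow> (nat \<times> nat) set" where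
  "EQbar n Q = (Epairs n - Q) \<union> {(j, i) | i j. (i, j) \<in> Q}"

definition Apoly :: "(nat \<times> nat) set \<Rightarrow> lpoly" where
  "Apoly Q = (\<Prod>(i, j)\<in>Q. xvar j * xinv i)"

definition Bpoly :: "nat \<Rightarrow> (nat \<Rightarrow> int) \<Rightarrow> lpoly" where
  "Bpoly n a = (\<Prod>(i, j)\<in>Epairs n. 1 - qpow (a j) * xvar j * xinv i)"

end

theory Submission imports Defs begin

text \<open>With \<open>R = r ` {1..s}\<close> and \<open>w = r s\<close>, the substitution \<open>Esub r s k\<close> sends \<open>x\<^sub>v\<close> for
  \<open>v \<in> R\<close> to \<open>x\<^sub>w\<close> times a power of \<open>q\<close> and fixes the other variables, so the \<open>x\<^sub>w\<close>-degree
  of the image of a monomial is the sum of its exponents at the variables in \<open>R\<close>; and the degree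
  is additive on products because Laurent polynomials form a domain. Hence \<open>E(x\<^sub>j/x\<^sub>i)\<close> has
  degree \<open>[j \<in> R] - [i \<in> R]\<close> and \<open>E(1 - q\<^sup>a x\<^sub>j/x\<^sub>i)\<close> has degree \<open>max 0 ([j \<in> R] - [i \<in> R])\<close>.
  Summing, the degree of \<open>E(A/B)\<close> is minus the number of edges of the tournament \<open>EQbar n Q\<close>
  that enter \<open>R\<close> from outside: it is never positive, and it vanishes iff every edge between \<open>R\<close>
  and its complement leaves \<open>R\<close>.\<close>

definition mono_subst :: "(nat \<Rightarrow> (nat \<Rightarrow>\<^sub>0 int)) \<Rightarrow> (nat \<Rightarrow>\<^sub>0 int) \<Rightarrow> (nat \<Rightarrow>\<^sub>0 int)" where
  "mono_subst g m = (\<Sum>v\<in>Poly_Mapping.keys m. Poly_Mapping.map (\<lambda>c. Poly_Mapping.lookup m v * c) (g v))"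

lemma lookup_mono_subst:
  assumes "finite S" "Poly_Mapping.keys m \<subseteq> S"
  shows "Poly_Mapping.lookup (mono_subst g m) w
    = (\<Sum>v\<in>S. Poly_Mapping.lookup m v * Poly_Mapping.lookup (g v) w)"
proof -
  have "Poly_Mapping.lookup (Poly_Mapping.map (\<lambda>c. a * c) p) w = a * Poly_Mapping.lookup p w"
    for a :: int and p :: "nat \<Rightarrow>\<^sub>0 int"
    by (simp add: Poly_Mapping.map.rep_eq when_def)
  then have "Poly_Mapping.lookup (mono_subst g m) w
      = (\<Sum>v\<in>Poly_Mapping.keys m. Poly_Mapping.lookup m v * Poly_Mapping.lookup (g v) w)"
    by (simp add: mono_subst_def lookup_sum)
  also have "\<dots> = (\<Sum>v\<in>S. Poly_Mapping.lookup m v * Poly_Mapping.lookup (g v) w)"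
    by (rule sum.mono_neutral_left) (use assms in \<open>auto simp: in_keys_iff\<close>)
  finally show ?thesis .
qed

lemma lookup_mono_subst_single:
  "Poly_Mapping.lookup (mono_subst g (Poly_Mapping.single v c)) w = c * Poly_Mapping.lookup (g v) w"
  by (subst lookup_mono_subst[of "{v}"]) auto

lemma mono_subst_zero [simp]: "mono_subst g 0 = 0"
  by (simp add: mono_subst_def)

lemma mono_subst_add: "mono_subst g (m1 + m2) = mono_subst g m1 + mono_subst g m2"
proof (rule poly_mapping_eqI)
  fix w
  let ?S = "Poly_Mapping.keys m1 \<union> Poly_Mapping.keys m2"
  have "Poly_Mapping.keys (m1 + m2) \<subseteq> ?S" by (rule keys_add)
  then show "Poly_Mapping.lookup (mono_subst g (m1 + m2)) w
      = Poly_Mapping.lookup (mono_subst g m1 + mono_subst g m2) w"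
    by (simp add: lookup_add lookup_mono_subst[of ?S] distrib_right sum.distrib)
qed

lemma lsubst_eq_frag_extend: "lsubst g = frag_extend (\<lambda>m. frag_of (mono_subst g m))"
proof
  fix p
  have "frag_cmul c (frag_of m) = Poly_Mapping.single m c" for c and m :: "nat \<Rightarrow>\<^sub>0 int"
    by (rule poly_mapping_eqI) (simp add: lookup_single when_def)
  then show "lsubst g p = frag_extend (\<lambda>m. frag_of (mono_subst g m)) p"
    by (simp add: lsubst_def frag_extend_def mono_subst_def)
qed

lemma lsubst_frag_of: "lsubst g (frag_of m) = frag_of (mono_subst g m)"
  by (simp add: lsubst_eq_frag_extend)

lemma lsubst_one: "lsubst g 1 = 1"
  using lsubst_frag_of[of g 0] by simp

lemma lsubst_diff: "lsubst g (p - q) = lsubst g p - lsubst g q"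
  by (simp add: lsubst_eq_frag_extend frag_extend_diff)

lemma lsubst_frag_of_mult: "lsubst g (frag_of m * q) = frag_of (mono_subst g m) * lsubst g q"
  using subset_UNIV[of "Poly_Mapping.keys q"]
proof (induction q rule: frag_induction)
  case zero then show ?case by (simp add: lsubst_eq_frag_extend)
next
  case (one m') then show ?case by (simp add: lsubst_frag_of mult_single mono_subst_add)
next
  case (diff a b) then show ?case by (simp add: lsubst_diff right_diff_distrib)
qed

lemma lsubst_mult: "lsubst g (p * q) = lsubst g p * lsubst g q"
  using subset_UNIV[of "Poly_Mapping.keys p"]
proof (induction p rule: frag_induction)
  case zero then show ?case by (simp add: lsubst_eq_frag_extend)
next
  case (one m) then show ?case by (simp add: lsubst_frag_of_mult lsubst_frag_of)
next
  case (diff a b) then show ?case by (simp add: lsubst_diff left_diff_distrib)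
qed

lemma lsubst_prod: "lsubst g (prod f A) = (\<Prod>x\<in>A. lsubst g (f x))"
  by (induction A rule: infinite_finite_induct) (simp_all add: lsubst_one lsubst_mult)

lemma lookup_le_ldeg:
  assumes "m \<in> Poly_Mapping.keys p"
  shows "Poly_Mapping.lookup m v \<le> ldeg v p"
  unfolding ldeg_def using assms by (auto intro: Max_ge)

lemma ldeg_attained:
  assumes "p \<noteq> 0"
  obtains m where "m \<in> Poly_Mapping.keys p" "Poly_Mapping.lookup m v = ldeg v p"
proof -
  have "ldeg v p \<in> (\<lambda>m. Poly_Mapping.lookup m v) ` Poly_Mapping.keys p"
    unfolding ldeg_def using assms by (intro Max_in) auto
  then show ?thesis using that by auto
qed

lemma ldeg_eqI:
  assumes "\<And>m. m \<in> Poly_Mapping.keys p \<Longrightarrow> Poly_Mapping.lookup m v \<le> d"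
    and "m' \<in> Poly_Mapping.keys p" "Poly_Mapping.lookup m' v = d"
  shows "ldeg v p = d"
  unfolding ldeg_def by (rule Max_eqI) (use assms in auto)

lemma ldeg_frag_of: "ldeg v (frag_of m) = Poly_Mapping.lookup m v"
  by (rule ldeg_eqI[where m' = m]) auto

lemma ldeg_one: "ldeg v (1 :: lpoly) = 0"
  by (rule ldeg_eqI[where m' = 0]) (auto simp flip: single_one)

lemma ldeg_one_minus_frag_of:
  assumes "m \<noteq> 0"
  shows "ldeg v (1 - frag_of m) = max 0 (Poly_Mapping.lookup m v)"
proof -
  have "Poly_Mapping.keys (1 - frag_of m) = {0, m}"
    using assms by (auto simp: in_keys_iff lookup_minus lookup_one when_def simp flip: single_one split: if_splits)
  then show ?thesis by (simp add: ldeg_def max_def)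
qed

lemma keys_mult_lookup:
  assumes "m \<in> Poly_Mapping.keys (p * q)"
  obtains m1 m2 where "m1 \<in> Poly_Mapping.keys p" "m2 \<in> Poly_Mapping.keys q"
    "Poly_Mapping.lookup m v = Poly_Mapping.lookup m1 v + Poly_Mapping.lookup m2 v"
  using keys_mult[of p q] assms that by (force simp: lookup_add)

lemma keys_mult_lookup_le:
  fixes p q :: lpoly
  assumes "m \<in> Poly_Mapping.keys (p * q)"
    and "\<And>m. m \<in> Poly_Mapping.keys p \<Longrightarrow> Poly_Mapping.lookup m v \<le> a"
    and "\<And>m. m \<in> Poly_Mapping.keys q \<Longrightarrow> Poly_Mapping.lookup m v \<le> b"
  shows "Poly_Mapping.lookup m v \<le> a + b"
  using assms(1)
proof (rule keys_mult_lookup[where v = v])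
  fix m1 m2 assume "m1 \<in> Poly_Mapping.keys p" "m2 \<in> Poly_Mapping.keys q"
    and "Poly_Mapping.lookup m v = Poly_Mapping.lookup m1 v + Poly_Mapping.lookup m2 v"
  with assms(2)[OF this(1)] assms(3)[OF this(2)] show ?thesis by linarith
qed

definition homog_part :: "nat \<Rightarrow> int \<Rightarrow> lpoly \<Rightarrow> lpoly" where
  "homog_part v d p = Poly_Mapping.mapp (\<lambda>m c. if Poly_Mapping.lookup m v = d then c else 0) p"

lemma lookup_homog_part:
  "Poly_Mapping.lookup (homog_part v d p) m = (if Poly_Mapping.lookup m v = d then Poly_Mapping.lookup p m else 0)"
  by (simp add: homog_part_def lookup_mapp when_def in_keys_iff)

lemma keys_homog_part: "m \<in> Poly_Mapping.keys (homog_part v d p) \<Longrightarrow> Poly_Mapping.lookup m v = d"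
  by (auto simp: in_keys_iff lookup_homog_part split: if_splits)

lemma homog_part_ldeg_nonzero:
  assumes "p \<noteq> 0"
  shows "homog_part v (ldeg v p) p \<noteq> 0"
proof
  obtain m where "m \<in> Poly_Mapping.keys p" "Poly_Mapping.lookup m v = ldeg v p"
    using ldeg_attained[OF assms] .
  moreover assume "homog_part v (ldeg v p) p = 0"
  then have "Poly_Mapping.lookup (homog_part v (ldeg v p) p) m = 0" by simp
  ultimately show False by (simp add: lookup_homog_part in_keys_iff)
qed

lemma keys_diff_homog_part_ldeg:
  assumes "m \<in> Poly_Mapping.keys (p - homog_part v (ldeg v p) p)"
  shows "Poly_Mapping.lookup m v < ldeg v p"
proof -
  have "m \<in> Poly_Mapping.keys p" "Poly_Mapping.lookup m v \<noteq> ldeg v p"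
    using assms by (auto simp: in_keys_iff lookup_minus lookup_homog_part split: if_splits)
  then show ?thesis using lookup_le_ldeg[of m p v] by simp
qed

text \<open>The product of the top homogeneous parts is nonzero because \<^typ>\<open>lpoly\<close> is an integral
  domain, and every other contribution to \<open>p * q\<close> has strictly smaller degree.\<close>

lemma ldeg_mult:
  assumes "p \<noteq> 0" "q \<noteq> 0"
  shows "ldeg v (p * q) = ldeg v p + ldeg v q"
proof -
  define tp where "tp = homog_part v (ldeg v p) p"
  define tq where "tq = homog_part v (ldeg v q) q"
  define rest where "rest = tp * (q - tq) + (p - tp) * q"
  have pq: "p * q = tp * tq + rest"
    unfolding rest_def by (simp add: algebra_simps)
  have tp_deg: "\<And>m. m \<in> Poly_Mapping.keys tp \<Longrightarrow> Poly_Mapping.lookup m v = ldeg v p"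
    and tq_deg: "\<And>m. m \<in> Poly_Mapping.keys tq \<Longrightarrow> Poly_Mapping.lookup m v = ldeg v q"
    unfolding tp_def tq_def by (fact keys_homog_part)+
  have rp_low: "\<And>m. m \<in> Poly_Mapping.keys (p - tp) \<Longrightarrow> Poly_Mapping.lookup m v \<le> ldeg v p - 1"
    and rq_low: "\<And>m. m \<in> Poly_Mapping.keys (q - tq) \<Longrightarrow> Poly_Mapping.lookup m v \<le> ldeg v q - 1"
    unfolding tp_def tq_def using keys_diff_homog_part_ldeg by fastforce+
  have rest_low: "Poly_Mapping.lookup m v \<le> ldeg v p + ldeg v q - 1"
    if "m \<in> Poly_Mapping.keys rest" for m
  proof -
    have "m \<in> Poly_Mapping.keys (tp * (q - tq)) \<union> Poly_Mapping.keys ((p - tp) * q)"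
      using that keys_add[of "tp * (q - tq)" "(p - tp) * q"] unfolding rest_def by blast
    then show ?thesis
    proof
      assume "m \<in> Poly_Mapping.keys (tp * (q - tq))"
      from keys_mult_lookup_le[OF this _ rq_low, of "ldeg v p"] show ?thesis by (simp add: tp_deg)
    next
      assume "m \<in> Poly_Mapping.keys ((p - tp) * q)"
      from keys_mult_lookup_le[OF this rp_low lookup_le_ldeg[of _ q v]] show ?thesis by simp
    qed
  qed
  have "tp \<noteq> 0" "tq \<noteq> 0"
    unfolding tp_def tq_def using assms by (simp_all add: homog_part_ldeg_nonzero)
  then have "tp * tq \<noteq> 0" by simp
  then obtain m0 where m0: "m0 \<in> Poly_Mapping.keys (tp * tq)"
    by (metis ex_in_conv keys_eq_empty)
  have m0_deg: "Poly_Mapping.lookup m0 v = ldeg v p + ldeg v q"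
    using m0 by (rule keys_mult_lookup[where v = v]) (simp add: tp_deg tq_deg)
  then have "m0 \<notin> Poly_Mapping.keys rest" using rest_low by force
  then have "m0 \<in> Poly_Mapping.keys (p * q)"
    using m0 by (simp add: pq in_keys_iff lookup_add)
  then show ?thesis
    using m0_deg keys_mult_lookup_le[OF _ lookup_le_ldeg lookup_le_ldeg] by (intro ldeg_eqI) auto
qed

lemma ldeg_prod:
  assumes "finite A" "\<And>x. x \<in> A \<Longrightarrow> f x \<noteq> (0 :: lpoly)"
  shows "ldeg v (prod f A) = (\<Sum>x\<in>A. ldeg v (f x))"
  using assms by (induction A rule: finite_induct) (simp_all add: ldeg_one ldeg_mult)

lemma rdeg_Fract:
  assumes "P \<noteq> 0" "Q \<noteq> 0"
  shows "rdeg v (Fract P Q) = ldeg v P - ldeg v Q"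
  unfolding rdeg_def
proof (rule the_equality)
  show "\<exists>P' Q'. P' \<noteq> 0 \<and> Q' \<noteq> 0 \<and> Fract P Q = Fract P' Q' \<and> ldeg v P - ldeg v Q = ldeg v P' - ldeg v Q'"
    using assms by blast
next
  fix d assume "\<exists>P' Q'. P' \<noteq> 0 \<and> Q' \<noteq> 0 \<and> Fract P Q = Fract P' Q' \<and> d = ldeg v P' - ldeg v Q'"
  then obtain P' Q' where h: "P' \<noteq> 0" "Q' \<noteq> 0" "Fract P Q = Fract P' Q'" "d = ldeg v P' - ldeg v Q'"
    by blast
  then have "P * Q' = P' * Q" using assms eq_fract(1) by blast
  then have "ldeg v P + ldeg v Q' = ldeg v P' + ldeg v Q" using assms h by (metis ldeg_mult)
  then show "d = ldeg v P - ldeg v Q" using h by simp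
qed

lemma xvar_mult_xinv: "xvar j * xinv i = frag_of (Poly_Mapping.single j 1 + Poly_Mapping.single i (-1))"
  by (simp add: xvar_def xinv_def lmono_def mult_single)

lemma ldeg_lsubst_xvar_mult_xinv:
  "ldeg w (lsubst g (xvar j * xinv i)) = Poly_Mapping.lookup (g j) w - Poly_Mapping.lookup (g i) w"
  by (simp add: xvar_mult_xinv lsubst_frag_of ldeg_frag_of mono_subst_add lookup_add
      lookup_mono_subst_single)

lemma ldeg_lsubst_one_minus:
  assumes "lsubst g (1 - qpow c * xvar j * xinv i) \<noteq> 0"
  shows "ldeg w (lsubst g (1 - qpow c * xvar j * xinv i))
    = max 0 (c * Poly_Mapping.lookup (g 0) w + Poly_Mapping.lookup (g j) w - Poly_Mapping.lookup (g i) w)"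
proof -
  define m where "m = mono_subst g (Poly_Mapping.single 0 c + (Poly_Mapping.single j 1 + Poly_Mapping.single i (-1)))"
  have "lsubst g (1 - qpow c * xvar j * xinv i) = 1 - frag_of m"
    by (simp add: m_def mult.assoc xvar_mult_xinv qpow_def lmono_def mult_single lsubst_diff
        lsubst_one lsubst_frag_of)
  moreover from this assms have "m \<noteq> 0" by auto
  ultimately show ?thesis
    by (simp add: ldeg_one_minus_frag_of m_def mono_subst_add lookup_add lookup_mono_subst_single)
qed

lemma finite_Epairs: "finite (Epairs n)"
  by (rule finite_subset[of _ "{1..n} \<times> {1..n}"]) (auto simp: Epairs_def)

lemma lsubst_xvar_mult_xinv_nonzero: "lsubst g (xvar j * xinv i) \<noteq> 0"
  by (simp add: xvar_mult_xinv lsubst_frag_of)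

lemma ldeg_lsubst_Apoly:
  assumes "finite Q"
  shows "ldeg w (lsubst g (Apoly Q))
    = (\<Sum>(i, j)\<in>Q. Poly_Mapping.lookup (g j) w - Poly_Mapping.lookup (g i) w)"
  using assms by (simp add: Apoly_def lsubst_prod ldeg_prod split_beta
      lsubst_xvar_mult_xinv_nonzero ldeg_lsubst_xvar_mult_xinv)

lemma ldeg_lsubst_Bpoly:
  assumes "lsubst g (Bpoly n a) \<noteq> 0"
  shows "ldeg w (lsubst g (Bpoly n a)) = (\<Sum>(i, j)\<in>Epairs n.
    max 0 (a j * Poly_Mapping.lookup (g 0) w + Poly_Mapping.lookup (g j) w - Poly_Mapping.lookup (g i) w))"
proof -
  have "lsubst g (1 - qpow (a j) * xvar j * xinv i) \<noteq> 0" if "(i, j) \<in> Epairs n" for i j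
    using assms that finite_Epairs by (auto simp: Bpoly_def lsubst_prod)
  then show ?thesis
    by (simp add: Bpoly_def lsubst_prod ldeg_prod finite_Epairs split_beta ldeg_lsubst_one_minus)
qed

lemma rdeg_lsubst_Apoly_Bpoly:
  assumes "Q \<subseteq> Epairs n" "lsubst g (Bpoly n a) \<noteq> 0" "Poly_Mapping.lookup (g 0) w = 0"
  shows "rdeg w (Fract (lsubst g (Apoly Q)) (lsubst g (Bpoly n a)))
    = (\<Sum>(i, j)\<in>Q. Poly_Mapping.lookup (g j) w - Poly_Mapping.lookup (g i) w)
      - (\<Sum>(i, j)\<in>Epairs n. max 0 (Poly_Mapping.lookup (g j) w - Poly_Mapping.lookup (g i) w))"
proof -
  have "finite Q" using assms(1) finite_Epairs by (rule finite_subset)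
  moreover have "lsubst g (Apoly Q) \<noteq> 0"
    using \<open>finite Q\<close> by (simp add: Apoly_def lsubst_prod split_beta lsubst_xvar_mult_xinv_nonzero)
  ultimately show ?thesis
    using assms(2,3) by (simp add: rdeg_Fract ldeg_lsubst_Apoly ldeg_lsubst_Bpoly)
qed

lemma sum_minus_sum_pos_part:
  fixes d :: "'a \<Rightarrow> int"
  assumes "finite E" "Q \<subseteq> E"
  shows "(\<Sum>x\<in>Q. d x) - (\<Sum>x\<in>E. max 0 (d x))
    = - ((\<Sum>x\<in>Q. max 0 (- d x)) + (\<Sum>x\<in>E - Q. max 0 (d x)))"
proof -
  have "(\<Sum>x\<in>E. max 0 (d x)) = (\<Sum>x\<in>Q. max 0 (d x)) + (\<Sum>x\<in>E - Q. max 0 (d x))"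
    using sum.subset_diff[OF assms(2,1)] by (simp add: add.commute)
  moreover have "d x - max 0 (d x) = - max 0 (- d x)" for x by simp
  ultimately show ?thesis by (simp add: sum_subtractf[symmetric] sum_negf)
qed

lemma sum_minus_sum_pos_part_nonpos:
  fixes d :: "'a \<Rightarrow> int"
  assumes "finite E" "Q \<subseteq> E"
  shows "(\<Sum>x\<in>Q. d x) - (\<Sum>x\<in>E. max 0 (d x)) \<le> 0"
proof -
  have "0 \<le> (\<Sum>x\<in>Q. max 0 (- d x))" "0 \<le> (\<Sum>x\<in>E - Q. max 0 (d x))"
    by (simp_all add: sum_nonneg)
  then show ?thesis unfolding sum_minus_sum_pos_part[OF assms] by linarith
qed

lemma sum_minus_sum_pos_part_eq_0_iff:
  fixes d :: "'a \<Rightarrow> int"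
  assumes "finite E" "Q \<subseteq> E"
  shows "(\<Sum>x\<in>Q. d x) - (\<Sum>x\<in>E. max 0 (d x)) = 0 \<longleftrightarrow> (\<forall>x\<in>Q. 0 \<le> d x) \<and> (\<forall>x\<in>E - Q. d x \<le> 0)"
proof -
  have "finite Q" using assms by (rule finite_subset[rotated])
  have "(\<Sum>x\<in>Q. max 0 (- d x)) + (\<Sum>x\<in>E - Q. max 0 (d x)) = 0
      \<longleftrightarrow> (\<Sum>x\<in>Q. max 0 (- d x)) = 0 \<and> (\<Sum>x\<in>E - Q. max 0 (d x)) = 0"
    by (simp add: add_nonneg_eq_0_iff sum_nonneg)
  also have "\<dots> \<longleftrightarrow> (\<forall>x\<in>Q. 0 \<le> d x) \<and> (\<forall>x\<in>E - Q. d x \<le> 0)"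
  proof -
    have "max 0 (- y) = 0 \<longleftrightarrow> 0 \<le> y" "max 0 y = 0 \<longleftrightarrow> y \<le> 0" for y :: int
      by auto
    then show ?thesis using \<open>finite Q\<close> assms(1) by (simp add: sum_nonneg_eq_0_iff)
  qed
  finally show ?thesis unfolding sum_minus_sum_pos_part[OF assms] neg_equal_0_iff_equal .
qed

lemma EQbar_leaves_iff:
  assumes "Q \<subseteq> Epairs n" "R \<subseteq> {1..n}"
  shows "(\<forall>x\<in>R. \<forall>m\<in>{1..n} - R. (x, m) \<in> EQbar n Q)
    \<longleftrightarrow> (\<forall>(i, j)\<in>Q. i \<in> R \<longrightarrow> j \<in> R) \<and> (\<forall>(i, j)\<in>Epairs n - Q. j \<in> R \<longrightarrow> i \<in> R)"
proof
  assume out: "\<forall>x\<in>R. \<forall>m\<in>{1..n} - R. (x, m) \<in> EQbar n Q"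
  have "j \<in> R" if "(i, j) \<in> Q" "i \<in> R" for i j
  proof (rule ccontr)
    assume "j \<notin> R"
    moreover have "(i, j) \<in> Epairs n" using that assms(1) by blast
    ultimately have "(i, j) \<in> EQbar n Q" using that out by (auto simp: Epairs_def)
    then have "(j, i) \<in> Epairs n" using that assms(1) by (auto simp: EQbar_def)
    with \<open>(i, j) \<in> Epairs n\<close> show False by (simp add: Epairs_def)
  qed
  moreover have "i \<in> R" if "(i, j) \<in> Epairs n - Q" "j \<in> R" for i j
  proof (rule ccontr)
    assume "i \<notin> R"
    with that out have "(j, i) \<in> EQbar n Q" by (auto simp: Epairs_def)
    with that show False by (auto simp: EQbar_def Epairs_def)
  qed
  ultimately show "(\<forall>(i, j)\<in>Q. i \<in> R \<longrightarrow> j \<in> R) \<and> (\<forall>(i, j)\<in>Epairs n - Q. j \<in> R \<longrightarrow> i \<in> R)"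
    by blast
next
  assume closed: "(\<forall>(i, j)\<in>Q. i \<in> R \<longrightarrow> j \<in> R) \<and> (\<forall>(i, j)\<in>Epairs n - Q. j \<in> R \<longrightarrow> i \<in> R)"
  show "\<forall>x\<in>R. \<forall>m\<in>{1..n} - R. (x, m) \<in> EQbar n Q"
  proof (intro ballI)
    fix x m assume x: "x \<in> R" and m: "m \<in> {1..n} - R"
    then have "x \<in> {1..n}" "x \<noteq> m" using assms(2) by auto
    then consider "(x, m) \<in> Epairs n" | "(m, x) \<in> Epairs n"
      using m by (auto simp: Epairs_def nat_neq_iff)
    then show "(x, m) \<in> EQbar n Q"
      using closed x m by cases (auto simp: EQbar_def)
  qed
qed

definition Esub_map :: "(nat \<Rightarrow> nat) \<Rightarrow> nat \<Rightarrow> (nat \<Rightarrow> int) \<Rightarrow> nat \<Rightarrow> (nat \<Rightarrow>\<^sub>0 int)" where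
  "Esub_map r s k v = (if \<exists>i\<in>{1..<s}. r i = v
     then Poly_Mapping.single (r s) 1 + Poly_Mapping.single 0 (k s - k (SOME i. i \<in> {1..<s} \<and> r i = v))
     else Poly_Mapping.single v 1)"

lemma Esub_eq_lsubst: "Esub r s k = lsubst (Esub_map r s k)"
  unfolding Esub_def Esub_map_def ..

lemma lookup_Esub_map_last:
  assumes "1 \<le> s" "r s \<noteq> 0"
  shows "Poly_Mapping.lookup (Esub_map r s k v) (r s) = of_bool (v \<in> r ` {1..s})"
proof (cases "\<exists>i\<in>{1..<s}. r i = v")
  case True
  then have "v \<in> r ` {1..s}" by force
  with True show ?thesis using assms(2) by (simp add: Esub_map_def lookup_add lookup_single)
next
  case False
  have "{1..s} = insert s {1..<s}" using assms(1) by auto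
  with False have "v \<in> r ` {1..s} \<longleftrightarrow> v = r s" by auto
  with False show ?thesis by (auto simp: Esub_map_def lookup_single)
qed

theorem mainTheorem8:
  fixes n s :: nat and a k :: "nat \<Rightarrow> int" and Q :: "(nat \<times> nat) set" and r :: "nat \<Rightarrow> nat"
  assumes "n \<ge> 1"
    and "Q \<subseteq> Epairs n"
    and "s \<ge> 1"
    and "strict_mono_on {1..s} r"
    and "1 \<le> r 1" and "r s \<le> n"
    and "Esub r s k (Bpoly n a) \<noteq> 0"
  shows "(rdeg (r s) (Fract (Esub r s k (Apoly Q)) (Esub r s k (Bpoly n a))) = 0
            \<longleftrightarrow> (\<forall>x\<in>r ` {1..s}. \<forall>m\<in>{1..n} - r ` {1..s}. (x, m) \<in> EQbar n Q))
         \<and> (\<not> (\<forall>x\<in>r ` {1..s}. \<forall>m\<in>{1..n} - r ` {1..s}. (x, m) \<in> EQbar n Q)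
            \<longrightarrow> rdeg (r s) (Fract (Esub r s k (Apoly Q)) (Esub r s k (Bpoly n a))) < 0)"
proof -
  define R where "R = r ` {1..s}"
  define d where "d = (\<lambda>(i, j). of_bool (j \<in> R) - of_bool (i \<in> R) :: int)"
  have r_bounds: "r 1 \<le> r i \<and> r i \<le> r s" if "i \<in> {1..s}" for i
    using that assms(3) strict_mono_on_leD[OF assms(4)] by auto
  then have R_sub: "R \<subseteq> {1..n}" using assms(5,6) by (force simp: R_def)
  have "r s \<noteq> 0" using assms(3,5) r_bounds[of s] by auto
  note lookup_Esub = lookup_Esub_map_last[of s r, OF assms(3) this]
  have "Poly_Mapping.lookup (Esub_map r s k 0) (r s) = 0"
    using R_sub by (auto simp: lookup_Esub R_def)
  then have "rdeg (r s) (Fract (Esub r s k (Apoly Q)) (Esub r s k (Bpoly n a)))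
      = (\<Sum>x\<in>Q. d x) - (\<Sum>x\<in>Epairs n. max 0 (d x))"
    using rdeg_lsubst_Apoly_Bpoly[OF assms(2)] assms(7)
    by (simp add: Esub_eq_lsubst lookup_Esub d_def split_beta R_def)
  moreover have "(\<forall>x\<in>Q. 0 \<le> d x) \<and> (\<forall>x\<in>Epairs n - Q. d x \<le> 0)
      \<longleftrightarrow> (\<forall>x\<in>R. \<forall>m\<in>{1..n} - R. (x, m) \<in> EQbar n Q)"
  proof -
    have "0 \<le> d x \<longleftrightarrow> (fst x \<in> R \<longrightarrow> snd x \<in> R)" "d x \<le> 0 \<longleftrightarrow> (snd x \<in> R \<longrightarrow> fst x \<in> R)" for x
      by (auto simp: d_def split_beta)
    then show ?thesis unfolding EQbar_leaves_iff[OF assms(2) R_sub] by (simp add: split_beta)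
  qed
  ultimately show ?thesis
    using sum_minus_sum_pos_part_eq_0_iff[OF finite_Epairs assms(2), where d = d]
      sum_minus_sum_pos_part_nonpos[OF finite_Epairs assms(2), where d = d]
    unfolding R_def by auto
qed

end
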